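(* Fix a prime $p>3$ and an integer $n\ge 2$, and write the base-$p$ expansion $n=\sum_{i=1}^k a_ip^{b_i}$ with $0<a_i\le p-1$ and $0\le b_1<\cdots<b_k$. Then $\prod_{i=1}^k a_i!\,p^{b_i}\le ((p-1)!)^{(n-1)/(p-2)}$. Furthermore, if $a_i=1$ for all $i$, then $\prod_{i=1}^k a_i!\,p^{b_i}\le \tfrac12((p-1)!)^{(n-1)/(p-2)}$. *)

theory Defs
  imports Complex_Main "HOL-Computational_Algebra.Primes"
begin

end

theory Submission
  imports Defs
begin

text \<open>
  With \<open>q = root (p - 2) ((p - 1)!)\<close> the right-hand side is \<open>q ^ (n - 1)\<close>. Every digit term
  satisfies \<open>a! * p ^ b \<le> q ^ (a * p ^ b - 1)\<close>: the factor \<open>a!\<close> costs at most \<open>q ^ (a - 1)\<close>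
  by log-convexity of the factorial, and \<open>p ^ b \<le> ((p - 1)!) ^ b\<close> costs \<open>q ^ (b * (p - 2))\<close>,
  which Bernoulli's inequality \<open>b * (p - 1) + 1 \<le> p ^ b\<close> absorbs. Multiplying over the \<open>k\<close>
  digits gives \<open>q ^ (n - k)\<close>, and the factor \<open>1/2\<close> of the second claim comes from \<open>q \<ge> 2\<close>,
  using either a second digit or \<open>b \<ge> 1\<close> for a single one.
\<close>

lemma fact_power_le_fact_power:
  fixes a m :: nat
  assumes "1 \<le> a" "a \<le> m"
  shows "fact a ^ (m - 1) \<le> (fact m ^ (a - 1) :: nat)"
  using assms(2)
proof (induction m rule: dec_induct)
  case base
  show ?case by (simp add: power_mult[symmetric] mult.commute)
next
  case (step m)
  have "fact a = (\<Prod>j\<in>{2..a}. j)"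
    using prod.atLeast_Suc_atMost[of 1 a "\<lambda>j. j"] assms(1)
    by (simp add: fact_prod numeral_2_eq_2)
  also have "\<dots> \<le> (\<Prod>j\<in>{2..a}. Suc m)"
    using step.hyps by (intro prod_mono) auto
  finally have fact_a: "fact a \<le> Suc m ^ (a - 1)"
    using assms(1) by simp
  have "Suc m - 1 = Suc (m - 1)"
    using step.hyps assms(1) by simp
  then have "fact a ^ (Suc m - 1) = fact a ^ (m - 1) * fact a"
    by (simp only: power_Suc2)
  also have "\<dots> \<le> fact m ^ (a - 1) * Suc m ^ (a - 1)"
    using step.IH fact_a by (rule mult_mono) auto
  also have "\<dots> = fact (Suc m) ^ (a - 1)"
    by (metis fact_Suc of_nat_id power_mult_distrib mult.commute)
  finally show ?case .
qed

lemma two_power_le_fact_Suc: "2 ^ m \<le> (fact (Suc m) :: nat)"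
proof (induction m)
  case (Suc m)
  have "2 ^ Suc m = 2 * 2 ^ m" by simp
  also have "\<dots> \<le> Suc (Suc m) * fact (Suc m)"
    using Suc by (intro mult_mono) auto
  finally show ?case by simp
qed simp

lemma Bernoulli_inequality_nat:
  fixes p b :: nat
  assumes "1 \<le> p"
  shows "b * (p - 1) + 1 \<le> p ^ b"
proof (induction b)
  case (Suc b)
  have "Suc b * (p - 1) + 1 = (b * (p - 1) + 1) + (p - 1)" by simp
  also have "\<dots> \<le> p ^ b + (p - 1) * p ^ b"
    using Suc assms by (intro add_mono) auto
  also have "\<dots> = p ^ Suc b"
    using assms by (cases p) auto
  finally show ?case .
qed simp

lemma le_fact_pred:
  fixes p :: nat
  assumes "3 < p"
  shows "p \<le> fact (p - 1)"
proof -
  obtain m where m: "p = m + 4"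
    using assms by (intro that[of "p - 4"]) simp
  then have "p - 1 = Suc (Suc (Suc m))"
    by simp
  have "(2::nat) \<le> fact (Suc (Suc m))"
    using order_trans[OF _ two_power_le_fact_Suc[of "Suc m"]] by simp
  then have "Suc (Suc (Suc m)) * 2 \<le> Suc (Suc (Suc m)) * fact (Suc (Suc m))"
    by (rule mult_le_mono2)
  also have "\<dots> = fact (p - 1)"
    unfolding \<open>p - 1 = Suc (Suc (Suc m))\<close> by (simp only: fact_Suc of_nat_id)
  finally show ?thesis
    using m by (simp add: numeral_eq_Suc del: fact_Suc)
qed

locale factorial_root =
  fixes p :: nat and q :: real
  assumes p_gt_3: "3 < p"
    and q_pos: "0 < q"
    and q_power: "q ^ (p - 2) = fact (p - 1)"
begin

lemma le_q_power_if_power_le: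
  assumes "0 \<le> x" "x ^ (p - 2) \<le> (q ^ m) ^ (p - 2)"
  shows "x \<le> q ^ m"
  using assms q_pos p_gt_3 power_mono_iff[of x "q ^ m" "p - 2"] by simp

lemma fact_powr_eq_q_power: "(fact (p - 1) :: real) powr (real m / (real p - 2)) = q ^ m"
proof -
  have "real p - 2 = real (p - 2)" "p - 2 \<noteq> 0"
    using p_gt_3 by (simp_all add: of_nat_diff)
  then have "(q ^ (p - 2)) powr (real m / (real p - 2)) = q powr real m"
    using q_pos by (simp add: powr_realpow[symmetric] powr_powr)
  then show ?thesis
    using q_pos by (simp add: q_power powr_realpow)
qed

lemma q_ge_2: "2 \<le> q"
proof (rule le_q_power_if_power_le[where m = 1, simplified])
  have "(2::nat) ^ (p - 2) \<le> fact (Suc (p - 2))"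
    by (rule two_power_le_fact_Suc)
  also have "Suc (p - 2) = p - 1"
    using p_gt_3 by simp
  finally show "(2::real) ^ (p - 2) \<le> q ^ (p - 2)"
    unfolding q_power by (metis of_nat_fact of_nat_le_iff of_nat_numeral of_nat_power)
qed simp

lemma fact_le_q_power:
  assumes "1 \<le> a" "a \<le> p - 1"
  shows "fact a \<le> q ^ (a - 1)"
proof (rule le_q_power_if_power_le)
  have "fact a ^ (p - 1 - 1) \<le> (fact (p - 1) ^ (a - 1) :: nat)"
    using assms by (rule fact_power_le_fact_power)
  then have "(fact a :: real) ^ (p - 2) \<le> fact (p - 1) ^ (a - 1)"
    by (metis diff_diff_left of_nat_fact of_nat_le_iff of_nat_power one_add_one)
  also have "\<dots> = (q ^ (a - 1)) ^ (p - 2)"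
    unfolding q_power[symmetric] by (simp only: power_mult[symmetric] mult.commute)
  finally show "(fact a :: real) ^ (p - 2) \<le> (q ^ (a - 1)) ^ (p - 2)" .
qed simp

lemma p_power_le_q_power: "real p ^ b \<le> q ^ (b * (p - 2))"
proof -
  have "real p ^ b \<le> fact (p - 1) ^ b"
    using of_nat_mono[OF le_fact_pred[OF p_gt_3], where 'a = real] by (intro power_mono) auto
  also have "\<dots> = q ^ (b * (p - 2))"
    unfolding q_power[symmetric] by (simp only: power_mult[symmetric] mult.commute)
  finally show ?thesis .
qed

lemma Bernoulli_inequality_p: "b * (p - 2) + b + 1 \<le> p ^ b"
proof -
  have "p - 1 = Suc (p - 2)"
    using p_gt_3 by simp
  then show ?thesis
    using Bernoulli_inequality_nat[of p b] p_gt_3 by (simp add: mult_Suc_right)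
qed

lemma digit_term_le_q_power:
  assumes "1 \<le> a" "a \<le> p - 1"
  shows "real (fact a * p ^ b) \<le> q ^ (a * p ^ b - 1)"
proof -
  obtain c where a: "a = Suc c"
    using assms(1) by (cases a) auto
  have "c \<le> c * p ^ b"
    using p_gt_3 by simp
  then have exponent: "(a - 1) + b * (p - 2) \<le> a * p ^ b - 1"
    using Bernoulli_inequality_p[of b] unfolding a mult_Suc by linarith
  have "real (fact a * p ^ b) \<le> q ^ (a - 1) * q ^ (b * (p - 2))"
    using fact_le_q_power[OF assms] p_power_le_q_power[of b] q_pos
    by (auto intro: mult_mono)
  also have "\<dots> \<le> q ^ (a * p ^ b - 1)"
    using exponent q_ge_2 by (simp add: power_add[symmetric] power_increasing)
  finally show ?thesis .
qed

lemma double_p_power_le_q_power: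
  assumes "1 \<le> b"
  shows "2 * real (p ^ b) \<le> q ^ (p ^ b - 1)"
proof -
  have exponent: "Suc (b * (p - 2)) \<le> p ^ b - 1"
    using Bernoulli_inequality_p[of b] assms by simp
  have "2 * real (p ^ b) \<le> q * q ^ (b * (p - 2))"
    using q_ge_2 p_power_le_q_power[of b] by (intro mult_mono) auto
  also have "\<dots> \<le> q ^ (p ^ b - 1)"
    unfolding power_Suc[symmetric] using exponent q_ge_2 by (intro power_increasing) auto
  finally show ?thesis .
qed

lemma digit_prod_le_q_power_card:
  assumes "\<forall>i\<in>I. 1 \<le> a i \<and> a i \<le> p - 1"
  shows "real (\<Prod>i\<in>I. fact (a i) * p ^ b i) \<le> q ^ ((\<Sum>i\<in>I. a i * p ^ b i) - card I)"
proof (cases "finite I")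
  case True
  have "real (\<Prod>i\<in>I. fact (a i) * p ^ b i) \<le> (\<Prod>i\<in>I. q ^ (a i * p ^ b i - 1))"
    unfolding of_nat_prod using assms digit_term_le_q_power by (intro prod_mono) auto
  also have "\<dots> = q ^ (\<Sum>i\<in>I. a i * p ^ b i - 1)"
    by (simp add: power_sum)
  also have "(\<Sum>i\<in>I. a i * p ^ b i - 1) = (\<Sum>i\<in>I. a i * p ^ b i) - card I"
  proof -
    have "(\<Sum>i\<in>I. a i * p ^ b i - 1) + card I = (\<Sum>i\<in>I. (a i * p ^ b i - 1) + 1)"
      unfolding sum.distrib by simp
    also have "\<dots> = (\<Sum>i\<in>I. a i * p ^ b i)"
      using assms p_gt_3 by (intro sum.cong) auto
    finally show ?thesis by linarith
  qed
  finally show ?thesis .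
qed simp

lemma digit_prod_le_q_power:
  assumes "finite I" "I \<noteq> {}" "\<forall>i\<in>I. 1 \<le> a i \<and> a i \<le> p - 1"
  shows "real (\<Prod>i\<in>I. fact (a i) * p ^ b i) \<le> q ^ ((\<Sum>i\<in>I. a i * p ^ b i) - 1)"
proof -
  have "1 \<le> card I"
    using assms(1,2) by (simp add: Suc_leI card_gt_0_iff)
  then have "q ^ ((\<Sum>i\<in>I. a i * p ^ b i) - card I) \<le> q ^ ((\<Sum>i\<in>I. a i * p ^ b i) - 1)"
    using q_ge_2 by (intro power_increasing) auto
  with digit_prod_le_q_power_card[of I a b] assms(3) show ?thesis
    by linarith
qed

lemma digit_prod_le_half_q_power:
  assumes "finite I" "\<forall>i\<in>I. a i = 1" "2 \<le> (\<Sum>i\<in>I. a i * p ^ b i)"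
  shows "real (\<Prod>i\<in>I. fact (a i) * p ^ b i) \<le> (1/2) * q ^ ((\<Sum>i\<in>I. a i * p ^ b i) - 1)"
    (is "?prod \<le> (1/2) * q ^ (?n - 1)")
proof (cases "card I = 1")
  case True
  then obtain j where I: "I = {j}"
    by (rule card_1_singletonE)
  then have "?n = p ^ b j" "?prod = real (p ^ b j)"
    using assms(2) by simp_all
  moreover have "1 \<le> b j"
    using assms(3) \<open>?n = p ^ b j\<close> by (cases "b j") auto
  ultimately show ?thesis
    using double_p_power_le_q_power[of "b j"] by simp
next
  case False
  moreover have "I \<noteq> {}"
    using assms(3) by auto
  ultimately have "2 \<le> card I"
    using assms(1) by (simp add: Suc_leI card_gt_0_iff numeral_2_eq_2 less_le)
  have "\<forall>i\<in>I. 1 \<le> a i \<and> a i \<le> p - 1"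
    using assms(2) p_gt_3 by auto
  then have "?prod \<le> q ^ (?n - card I)"
    by (rule digit_prod_le_q_power_card)
  also have "\<dots> \<le> q ^ (?n - 2)"
    using q_ge_2 \<open>2 \<le> card I\<close> by (intro power_increasing) auto
  also have "\<dots> \<le> (1/2) * q ^ (?n - 1)"
  proof -
    have "?n - 1 = Suc (?n - 2)"
      using assms(3) by simp
    then show ?thesis
      using q_ge_2 q_pos by (simp add: mult_right_mono)
  qed
  finally show ?thesis .
qed

end

lemma factorial_root_root: "3 < p \<Longrightarrow> factorial_root p (root (p - 2) (fact (p - 1)))"
  by unfold_locales (simp_all add: real_root_pow_pos)

theorem lemma6p1:
  fixes p n k :: nat and a b :: "nat \<Rightarrow> nat"
  assumes "prime p" and "p > 3" and "n \<ge> 2"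
    and "n = (\<Sum>i=1..k. a i * p ^ b i)"
    and "\<forall>i\<in>{1..k}. 0 < a i \<and> a i \<le> p - 1"
    and "\<forall>i\<in>{1..k}. \<forall>j\<in>{1..k}. i < j \<longrightarrow> b i < b j"
  shows "real (\<Prod>i=1..k. fact (a i) * p ^ b i)
           \<le> (fact (p - 1) :: real) powr ((real n - 1) / (real p - 2))
         \<and> ((\<forall>i\<in>{1..k}. a i = 1) \<longrightarrow>
            real (\<Prod>i=1..k. fact (a i) * p ^ b i)
              \<le> (1/2) * (fact (p - 1) :: real) powr ((real n - 1) / (real p - 2)))"
proof -
  define q where "q = root (p - 2) (fact (p - 1))"
  interpret factorial_root p q
    unfolding q_def using \<open>p > 3\<close> by (rule factorial_root_root)
  have rhs: "(fact (p - 1) :: real) powr ((real n - 1) / (real p - 2)) = q ^ (n - 1)"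
    using fact_powr_eq_q_power[of "n - 1"] \<open>n \<ge> 2\<close> by (simp add: of_nat_diff)
  have "{1..k} \<noteq> {}"
    using assms(3,4) by (cases k) auto
  moreover have "\<forall>i\<in>{1..k}. 1 \<le> a i \<and> a i \<le> p - 1"
    using assms(5) by (simp add: Suc_leI)
  ultimately have "real (\<Prod>i=1..k. fact (a i) * p ^ b i) \<le> q ^ (n - 1)"
    using digit_prod_le_q_power[of "{1..k}" a b] assms(4) by simp
  moreover have "real (\<Prod>i=1..k. fact (a i) * p ^ b i) \<le> (1/2) * q ^ (n - 1)"
    if "\<forall>i\<in>{1..k}. a i = 1"
    using digit_prod_le_half_q_power[of "{1..k}" a b] that assms(3,4) by simp
  ultimately show ?thesis
    unfolding rhs by blast
qed

end
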